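(* Let $f \in \mathbb{Z}[T, Y]$ be monic in $Y$, of degree $d_T$ in $T$ and degree $d_Y$ in $Y$. Let $t = a/b \in \mathbb{Q}$ be written in lowest terms, and let $y \in \mathbb{Q}$ satisfy $f(t, y) = 0$. Then $y = c / b^{d_T}$ for some $c \in \mathbb{Z}$ with $|c| \leq 2 (d_T + 1) \|f\| H(t)^{d_T}$.
   Context: Monic in $Y$ means the leading coefficient of $f$ as a polynomial in $Y$ over $\mathbb{Z}[T]$ is $1$. The height of $t = a/b$ in lowest terms is $H(t) = \max(|a|,|b|)$. For a nonzero integer polynomial $f$, $\|f\|$ is the maximum of $2$ and the absolute values of its coefficients. *)

theory Defs
  imports "HOL-Computational_Algebra.Polynomial"
begin

text \<open>A bivariate integer polynomial f in Z[T,Y] is represented as a polynomial in Y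
  whose coefficients are polynomials in T: type int poly poly.\<close>

definition bivar_eval :: "int poly poly \<Rightarrow> rat \<Rightarrow> rat \<Rightarrow> rat" where
  "bivar_eval f t y = poly (map_poly (\<lambda>p. poly (map_poly rat_of_int p) t) f) y"

definition degT :: "int poly poly \<Rightarrow> nat" where
  "degT f = Max {degree (coeff f i) | i. i \<le> degree f}"

definition monic_Y :: "int poly poly \<Rightarrow> bool" where
  "monic_Y f \<longleftrightarrow> lead_coeff f = 1"

definition bnorm :: "int poly poly \<Rightarrow> int" where
  "bnorm f = Max (insert 2 {\<bar>coeff (coeff f i) j\<bar> | i j. i \<le> degree f \<and> j \<le> degree (coeff f i)})"

definition rat_height :: "rat \<Rightarrow> int" where
  "rat_height t = (case quotient_of t of (a, b) \<Rightarrow> max \<bar>a\<bar> \<bar>b\<bar>)"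

end

theory Submission
  imports Defs
begin

text \<open>
  Write t = a/b, D = degT f and B = b^D. Multiplying a Y-coefficient f_i(t) by B gives an
  integer of absolute value at most M = (D+1) ||f|| H(t)^D, and also |B| \<le> M. Hence w = B y
  is a root of the monic polynomial with coefficients B^(n-i) f_i(t), which are integers bounded
  by M^(n-i). A rational algebraic integer is an integer, and |w| > 2M is impossible: the other
  terms would sum to at most |w|^n (M/|w| + (M/|w|)^2 + ...) < |w|^n.
\<close>

definition scale_roots :: "'a::field \<Rightarrow> 'a poly \<Rightarrow> 'a poly" where
  "scale_roots B F = smult (B ^ degree F) (pcompose F [:0, inverse B:])"

lemma degree_scale_roots:
  assumes "B \<noteq> 0"
  shows "degree (scale_roots B F) = degree F"
  using assms by (simp add: scale_roots_def degree_pcompose)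

lemma coeff_scale_roots:
  assumes "B \<noteq> 0" "i \<le> degree F"
  shows "coeff (scale_roots B F) i = B ^ (degree F - i) * coeff F i"
proof -
  have "B ^ degree F = B ^ (degree F - i) * B ^ i"
    using assms(2) by (simp flip: power_add)
  then show ?thesis
    using assms(1) by (simp add: scale_roots_def coeff_pcompose_linear field_simps)
qed

lemma lead_coeff_scale_roots:
  assumes "B \<noteq> 0"
  shows "lead_coeff (scale_roots B F) = lead_coeff F"
  using assms by (simp add: degree_scale_roots coeff_scale_roots)

lemma poly_scale_roots:
  assumes "B \<noteq> 0"
  shows "poly (scale_roots B F) (B * x) = B ^ degree F * poly F x"
  using assms by (simp add: scale_roots_def poly_pcompose field_simps)

lemma sum_power_mult_power_lt:
  fixes M x :: "'a::linordered_idom"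
  assumes "0 \<le> M" "2 * M < x"
  shows "(\<Sum>i<n. M ^ (n - i) * x ^ i) < x ^ n"
proof (induction n)
  case 0
  then show ?case by simp
next
  case (Suc n)
  have "(\<Sum>i<Suc n. M ^ (Suc n - i) * x ^ i) = M * ((\<Sum>i<n. M ^ (n - i) * x ^ i) + x ^ n)"
    by (simp add: sum_distrib_left Suc_diff_le mult.assoc distrib_left)
  also have "\<dots> \<le> M * (2 * x ^ n)"
    using Suc assms by (intro mult_left_mono) auto
  also have "\<dots> < x * x ^ n"
    using assms by (simp add: mult.assoc[symmetric])
  finally show ?case by simp
qed

lemma abs_root_monic_le:
  fixes G :: "'a::linordered_idom poly"
  assumes "lead_coeff G = 1" "poly G x = 0" "0 \<le> M"
    and "\<And>i. i < degree G \<Longrightarrow> \<bar>coeff G i\<bar> \<le> M ^ (degree G - i)"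
  shows "\<bar>x\<bar> \<le> 2 * M"
proof (rule ccontr)
  define n where "n = degree G"
  assume "\<not> \<bar>x\<bar> \<le> 2 * M"
  then have big: "2 * M < \<bar>x\<bar>" by simp
  have "0 = (\<Sum>i<n. coeff G i * x ^ i) + x ^ n"
    using assms(1,2) by (simp add: poly_altdef n_def lessThan_Suc_atMost[symmetric])
  then have "\<bar>x\<bar> ^ n = \<bar>\<Sum>i<n. coeff G i * x ^ i\<bar>"
    by (metis abs_minus_cancel add_eq_0_iff power_abs)
  also have "\<dots> \<le> (\<Sum>i<n. \<bar>coeff G i\<bar> * \<bar>x\<bar> ^ i)"
    using sum_abs[of "\<lambda>i. coeff G i * x ^ i" "{..<n}"] by (simp add: abs_mult power_abs)
  also have "\<dots> \<le> (\<Sum>i<n. M ^ (n - i) * \<bar>x\<bar> ^ i)"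
    using assms(4) by (intro sum_mono mult_right_mono) (auto simp: n_def)
  also have "\<dots> < \<bar>x\<bar> ^ n"
    using sum_power_mult_power_lt[OF assms(3) big] .
  finally show False by simp
qed

lemma monic_root_times_denominator:
  fixes F :: "rat poly" and B M y :: rat
  assumes monic: "lead_coeff F = 1" and root: "poly F y = 0"
    and B: "B \<in> \<int>" "B \<noteq> 0" "\<bar>B\<bar> \<le> M"
    and num: "\<And>i. B * coeff F i \<in> \<int>" "\<And>i. \<bar>B * coeff F i\<bar> \<le> M"
  shows "B * y \<in> \<int>" and "\<bar>B * y\<bar> \<le> 2 * M"
proof -
  define n where "n = degree F"
  define G where "G = scale_roots B F"
  have degG: "degree G = n"
    using B by (simp add: G_def n_def degree_scale_roots)
  have lowG: "coeff G i = B ^ (n - Suc i) * (B * coeff F i)" if "i < n" for i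
    using that B by (simp add: G_def n_def coeff_scale_roots Suc_diff_Suc flip: mult.assoc power_Suc2)
  have leadG: "lead_coeff G = 1"
    using B monic by (simp add: G_def lead_coeff_scale_roots)
  have rootG: "poly G (B * y) = 0"
    using B root by (simp add: G_def poly_scale_roots)
  have "coeff G i \<in> \<int>" for i
  proof (cases rule: linorder_cases[of i n])
    case less
    then show ?thesis using B num by (simp add: lowG)
  next
    case equal
    then show ?thesis using leadG degG by simp
  next
    case greater
    then show ?thesis using degG by (simp add: coeff_eq_0)
  qed
  with leadG rootG have "algebraic_int (B * y)"
    by (blast intro: algebraic_int.intros)
  then show "B * y \<in> \<int>"
    by (rule rational_algebraic_int_is_int) (metis Rats_divide Rats_of_int quotient_of_div surj_pair)
  have "\<bar>coeff G i\<bar> \<le> M ^ (degree G - i)" if "i < degree G" for i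
  proof -
    have "\<bar>coeff G i\<bar> = \<bar>B\<bar> ^ (n - Suc i) * \<bar>B * coeff F i\<bar>"
      using that degG by (simp add: lowG abs_mult power_abs)
    also have "\<dots> \<le> M ^ (n - Suc i) * M"
      using B num by (intro mult_mono power_mono) auto
    also have "\<dots> = M ^ (degree G - i)"
      using that degG by (simp flip: power_Suc2 add: Suc_diff_Suc)
    finally show ?thesis .
  qed
  moreover have "0 \<le> M" using B by linarith
  ultimately show "\<bar>B * y\<bar> \<le> 2 * M"
    using abs_root_monic_le[OF leadG rootG] by blast
qed

lemma denominator_power_mult_poly_eval:
  fixes p :: "int poly" and a b :: int
  assumes "degree p \<le> D" "b \<noteq> 0"
  shows "(of_int b ^ D * poly (map_poly of_int p) (of_int a / of_int b) :: 'a::field_char_0)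
           = of_int (\<Sum>j\<le>D. coeff p j * a ^ j * b ^ (D - j))"
proof -
  have "poly (map_poly of_int p) (of_int a / of_int b)
          = (\<Sum>j\<le>D. (of_int (coeff p j) :: 'a) * (of_int a / of_int b) ^ j)"
    using assms(1) unfolding poly_altdef
    by (intro sum.mono_neutral_cong_left) (auto simp: degree_map_poly coeff_map_poly coeff_eq_0)
  moreover have "(of_int b :: 'a) ^ D * (of_int a / of_int b) ^ j = of_int a ^ j * of_int b ^ (D - j)"
    if "j \<le> D" for j
    using that assms(2) by (simp add: field_simps flip: power_add)
  ultimately show ?thesis
    by (simp add: sum_distrib_left mult.left_commute[of "of_int b ^ D"] mult.assoc)
qed

lemma abs_homogeneous_sum_le:
  fixes a b N :: "'a::linordered_idom"
  assumes "\<And>j. j \<le> D \<Longrightarrow> \<bar>c j\<bar> \<le> N"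
  shows "\<bar>\<Sum>j\<le>D. c j * a ^ j * b ^ (D - j)\<bar> \<le> (of_nat D + 1) * N * max \<bar>a\<bar> \<bar>b\<bar> ^ D"
proof -
  define H where "H = max \<bar>a\<bar> \<bar>b\<bar>"
  have "\<bar>c j * a ^ j * b ^ (D - j)\<bar> \<le> N * H ^ D" if "j \<le> D" for j
  proof -
    have "\<bar>a\<bar> ^ j * \<bar>b\<bar> ^ (D - j) \<le> H ^ j * H ^ (D - j)"
      by (intro mult_mono power_mono) (auto simp: H_def)
    also have "\<dots> = H ^ D"
      using that by (simp flip: power_add)
    finally show ?thesis
      using assms[OF that] by (simp add: abs_mult power_abs mult.assoc mult_mono)
  qed
  then have "(\<Sum>j\<le>D. \<bar>c j * a ^ j * b ^ (D - j)\<bar>) \<le> (\<Sum>j\<le>D. N * H ^ D)"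
    by (intro sum_mono) simp
  with sum_abs have "\<bar>\<Sum>j\<le>D. c j * a ^ j * b ^ (D - j)\<bar> \<le> (\<Sum>j\<le>D. N * H ^ D)"
    by (rule order_trans)
  then show ?thesis
    by (simp add: H_def mult.assoc add.commute)
qed

lemma degree_coeff_le_degT: "degree (coeff (f :: int poly poly) i) \<le> degT f"
proof (cases "i \<le> degree f")
  case True
  then show ?thesis
    unfolding degT_def by (intro Max_ge) auto
qed (simp add: coeff_eq_0)

lemma finite_abs_coeffs:
  "finite {\<bar>coeff (coeff (f :: int poly poly) i) j\<bar> | i j. i \<le> degree f \<and> j \<le> degree (coeff f i)}"
proof (rule finite_subset)
  show "{\<bar>coeff (coeff f i) j\<bar> | i j. i \<le> degree f \<and> j \<le> degree (coeff f i)}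
          \<subseteq> (\<lambda>(i, j). \<bar>coeff (coeff f i) j\<bar>) ` ({..degree f} \<times> {..degT f})"
    using degree_coeff_le_degT by (force intro: order_trans)
qed simp

lemma bnorm_ge_two: "2 \<le> bnorm f"
  unfolding bnorm_def using finite_abs_coeffs by (intro Max_ge) auto

lemma abs_coeff_coeff_le_bnorm: "\<bar>coeff (coeff f i) j\<bar> \<le> bnorm f"
proof (cases "i \<le> degree f \<and> j \<le> degree (coeff f i)")
  case True
  then show ?thesis
    unfolding bnorm_def using finite_abs_coeffs by (intro Max_ge) auto
next
  case False
  then have "coeff (coeff f i) j = 0"
    by (auto simp: coeff_eq_0)
  then show ?thesis
    using bnorm_ge_two[of f] by simp
qed

lemma denominator_power_mult_coeff_eval:
  fixes f :: "int poly poly" and t :: rat and i :: nat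
  assumes "quotient_of t = (a, b)"
  defines "e \<equiv> rat_of_int b ^ degT f * poly (map_poly rat_of_int (coeff f i)) t"
  shows "e \<in> \<int>"
    and "\<bar>e\<bar> \<le> of_int ((int (degT f) + 1) * bnorm f * rat_height t ^ degT f)"
proof -
  define D where "D = degT f"
  have "b \<noteq> 0" using quotient_of_denom_pos[OF assms(1)] by simp
  then have e: "e = of_int (\<Sum>j\<le>D. coeff (coeff f i) j * a ^ j * b ^ (D - j))"
    unfolding e_def D_def quotient_of_div[OF assms(1)]
    by (intro denominator_power_mult_poly_eval degree_coeff_le_degT)
  then show "e \<in> \<int>" by (simp only: Ints_of_int)
  have "\<bar>\<Sum>j\<le>D. coeff (coeff f i) j * a ^ j * b ^ (D - j)\<bar>
          \<le> (int D + 1) * bnorm f * max \<bar>a\<bar> \<bar>b\<bar> ^ D"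
    by (intro abs_homogeneous_sum_le abs_coeff_coeff_le_bnorm)
  then show "\<bar>e\<bar> \<le> of_int ((int (degT f) + 1) * bnorm f * rat_height t ^ degT f)"
    unfolding e D_def rat_height_def assms(1) of_int_abs[symmetric] of_int_le_iff by simp
qed

lemma abs_denominator_power_le:
  fixes f :: "int poly poly" and t :: rat
  assumes "quotient_of t = (a, b)"
  shows "\<bar>b\<bar> ^ degT f \<le> (int (degT f) + 1) * bnorm f * rat_height t ^ degT f"
proof -
  have "1 \<le> (int (degT f) + 1) * bnorm f"
    using bnorm_ge_two[of f] mult_mono[of 1 "int (degT f) + 1" 1 "bnorm f"] by simp
  have "\<bar>b\<bar> ^ degT f \<le> rat_height t ^ degT f"
    using assms by (intro power_mono) (auto simp: rat_height_def)
  also have "\<dots> = 1 * rat_height t ^ degT f"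
    by simp
  also have "\<dots> \<le> (int (degT f) + 1) * bnorm f * rat_height t ^ degT f"
    using \<open>1 \<le> (int (degT f) + 1) * bnorm f\<close> assms
    by (intro mult_right_mono) (auto simp: rat_height_def)
  finally show ?thesis .
qed

theorem lemma2p4:
  fixes f :: "int poly poly" and t y :: rat and a b :: int
  assumes "monic_Y f"
    and "quotient_of t = (a, b)"
    and "bivar_eval f t y = 0"
  shows "\<exists>c :: int. y = of_int c / of_int b ^ degT f \<and>
           \<bar>c\<bar> \<le> 2 * (int (degT f) + 1) * bnorm f * rat_height t ^ degT f"
proof -
  define F where "F = map_poly (\<lambda>p. poly (map_poly rat_of_int p) t) f"
  define B where "B = rat_of_int b ^ degT f"
  define M where "M = (int (degT f) + 1) * bnorm f * rat_height t ^ degT f"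
  have "b > 0" using assms(2) by (rule quotient_of_denom_pos)
  have "lead_coeff F = 1"
    using assms(1) by (simp add: F_def monic_Y_def lead_coeff_map_poly_nz)
  moreover have "poly F y = 0"
    using assms(3) by (simp add: F_def bivar_eval_def)
  moreover have "B \<in> \<int>" "B \<noteq> 0"
    using \<open>b > 0\<close> by (simp_all add: B_def)
  moreover have "\<bar>B\<bar> \<le> of_int M"
    using abs_denominator_power_le[OF assms(2), of f]
    unfolding B_def M_def power_abs of_int_abs[symmetric] of_int_power[symmetric] of_int_le_iff .
  moreover have "B * coeff F i \<in> \<int>" "\<bar>B * coeff F i\<bar> \<le> of_int M" for i
    using denominator_power_mult_coeff_eval[OF assms(2)]
    by (simp_all add: F_def B_def M_def coeff_map_poly)
  ultimately have "B * y \<in> \<int>" "\<bar>B * y\<bar> \<le> 2 * of_int M"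
    by (rule monic_root_times_denominator)+
  then obtain c where "B * y = of_int c" "\<bar>c\<bar> \<le> 2 * M"
    by (metis Ints_cases of_int_abs of_int_le_iff of_int_mult of_int_numeral)
  then show ?thesis
    using \<open>B \<noteq> 0\<close> unfolding B_def M_def by (auto simp: field_simps)
qed

end
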